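(* For any pair $(n,k)\in\mathbb{N}\times\mathbb{N}$: (a) if $(n,k)$ is extremely good, then the greedy algorithm is completely universally optimal on $(n,k)$; (b) if $(n,k)$ is good, then the greedy algorithm is universally optimal on $(n,k)$.
   Context: All graphs are undirected and unweighted. For a graph $G=(V,E)$ and integer $k$, a $k$-spanner of $G$ is a subgraph $H=(V,E')$, $E'\subseteq E$, with $\mathrm{dist}_H(u,v)\le k\cdot\mathrm{dist}_G(u,v)$ for all $u,v\in V$. A minimum $k$-spanner is a $k$-spanner with the fewest edges. Girth = length of a shortest cycle ($+\infty$ if acyclic). The greedy algorithm on input $\langle G,k\rangle$ with total ordering $\sigma$ of $E$ starts from $H=(V,\emptyset)$ and processes edges in order $\sigma$, adding edge $(u,v)$ iff the current $\mathrm{dist}_H(u,v)>k$, and outputs the final $H$. A pair $(n,k)$ is extremely good if for every $n$-vertex graph all of its minimum $k$-spanners have girth at least $k+2$; good if for every $n$-vertex graph at least one of its minimum $k$-spanners has girth at least $k+2$. The greedy algorithm is completely universally optimal on $(n,k)$ if for every $n$-vertex graph $G$, every minimum $k$-spanner of $G$ is output by the greedy algorithm on input $\langle G,k\rangle$ for some edge ordering $\sigma$; it is universally optimal on $(n,k)$ if for every $n$-vertex graph $G$ some minimum $k$-spanner of $G$ is output by the greedy algorithm for some edge ordering $\sigma$. *)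

theory Defs
  imports Main "HOL-Library.Extended_Nat"
begin

definition graph_on :: "nat \<Rightarrow> nat set set \<Rightarrow> bool" where
  "graph_on n E \<longleftrightarrow> E \<subseteq> {{u, v} | u v. u < n \<and> v < n \<and> u \<noteq> v}"

definition walk :: "nat set set \<Rightarrow> nat list \<Rightarrow> bool" where
  "walk E xs \<longleftrightarrow> xs \<noteq> [] \<and> (\<forall>i. Suc i < length xs \<longrightarrow> {xs ! i, xs ! Suc i} \<in> E)"

text \<open>Graph distance (infinity if no path).\<close>
definition gdist :: "nat set set \<Rightarrow> nat \<Rightarrow> nat \<Rightarrow> enat" where
  "gdist E u v = Inf {enat (length xs - 1) | xs. walk E xs \<and> hd xs = u \<and> last xs = v}"

definition is_spanner :: "nat \<Rightarrow> nat \<Rightarrow> nat set set \<Rightarrow> nat set set \<Rightarrow> bool" where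
  "is_spanner n k E H \<longleftrightarrow> H \<subseteq> E \<and>
     (\<forall>u<n. \<forall>v<n. gdist E u v \<noteq> \<infinity> \<longrightarrow> gdist H u v \<le> enat k * gdist E u v)"

definition is_min_spanner :: "nat \<Rightarrow> nat \<Rightarrow> nat set set \<Rightarrow> nat set set \<Rightarrow> bool" where
  "is_min_spanner n k E H \<longleftrightarrow> is_spanner n k E H \<and>
     (\<forall>H'. is_spanner n k E H' \<longrightarrow> card H \<le> card H')"

definition is_cycle :: "nat set set \<Rightarrow> nat list \<Rightarrow> bool" where
  "is_cycle E vs \<longleftrightarrow> length vs \<ge> 3 \<and> distinct vs \<and> walk E vs \<and> {last vs, hd vs} \<in> E"

definition girth :: "nat set set \<Rightarrow> enat" where
  "girth E = Inf {enat (length vs) | vs. is_cycle E vs}"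

definition greedy_step :: "nat \<Rightarrow> nat set set \<Rightarrow> nat set \<Rightarrow> nat set set" where
  "greedy_step k H e = (if \<exists>u v. e = {u, v} \<and> enat k < gdist H u v then insert e H else H)"

definition greedy :: "nat \<Rightarrow> nat set list \<Rightarrow> nat set set" where
  "greedy k \<sigma> = foldl (greedy_step k) {} \<sigma>"

definition edge_ordering :: "nat set set \<Rightarrow> nat set list \<Rightarrow> bool" where
  "edge_ordering E \<sigma> \<longleftrightarrow> distinct \<sigma> \<and> set \<sigma> = E"

definition extremely_good :: "nat \<Rightarrow> nat \<Rightarrow> bool" where
  "extremely_good n k \<longleftrightarrow> (\<forall>E H. graph_on n E \<longrightarrow> is_min_spanner n k E H \<longrightarrow> enat (k + 2) \<le> girth H)"

definition good :: "nat \<Rightarrow> nat \<Rightarrow> bool" where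
  "good n k \<longleftrightarrow> (\<forall>E. graph_on n E \<longrightarrow> (\<exists>H. is_min_spanner n k E H \<and> enat (k + 2) \<le> girth H))"

definition greedy_completely_universally_optimal :: "nat \<Rightarrow> nat \<Rightarrow> bool" where
  "greedy_completely_universally_optimal n k \<longleftrightarrow>
     (\<forall>E H. graph_on n E \<longrightarrow> is_min_spanner n k E H \<longrightarrow> (\<exists>\<sigma>. edge_ordering E \<sigma> \<and> greedy k \<sigma> = H))"

definition greedy_universally_optimal :: "nat \<Rightarrow> nat \<Rightarrow> bool" where
  "greedy_universally_optimal n k \<longleftrightarrow>
     (\<forall>E. graph_on n E \<longrightarrow> (\<exists>H \<sigma>. is_min_spanner n k E H \<and> edge_ordering E \<sigma> \<and> greedy k \<sigma> = H))"

end

theory Submission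
  imports Defs
begin

text \<open>
  If a \<open>k\<close>-spanner \<open>H\<close> of \<open>G\<close> has girth at least \<open>k + 2\<close>, the greedy algorithm outputs \<open>H\<close> when
  it first scans the edges of \<open>H\<close> and then the remaining edges of \<open>G\<close>. An edge \<open>{u, v}\<close> of \<open>H\<close>
  is never spanned by the previously accepted edges of \<open>H\<close>: a \<open>u\<close>--\<open>v\<close> path of length at most
  \<open>k\<close> avoiding \<open>{u, v}\<close> would close a cycle of length at most \<open>k + 1\<close>. Afterwards every edge
  of \<open>G\<close> has stretch at most \<open>k\<close> in \<open>H\<close>, so nothing more is added.
\<close>

lemma walk_singleton [simp]: "walk E [x]"
  unfolding walk_def by simp

lemma walk_Cons_Cons [simp]: "walk E (x # y # xs) \<longleftrightarrow> {x, y} \<in> E \<and> walk E (y # xs)"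
  unfolding walk_def by (auto simp: less_Suc_eq_0_disj)

lemma walk_appendD2: "walk E (xs @ ys) \<Longrightarrow> ys \<noteq> [] \<Longrightarrow> walk E ys"
proof (induction xs)
  case (Cons x xs)
  then show ?case by (cases "xs @ ys") auto
qed simp

lemma walk_mono: "walk E xs \<Longrightarrow> E \<subseteq> F \<Longrightarrow> walk F xs"
  unfolding walk_def by blast

lemma walk_to_path:
  assumes "walk E xs"
  obtains ys where "walk E ys" "distinct ys" "hd ys = hd xs" "last ys = last xs"
    "length ys \<le> length xs"
  using assms
proof (induction xs arbitrary: thesis)
  case Nil
  then show ?case by (simp add: walk_def)
next
  case (Cons x xs)
  show ?case
  proof (cases xs)
    case Nil
    then show ?thesis using Cons.prems(1)[of "[x]"] by simp
  next
    fix y zs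
    assume xs: "xs = y # zs"
    then have xy: "{x, y} \<in> E" and "walk E xs"
      using Cons.prems(2) by simp_all
    then obtain ys where ys: "walk E ys" "distinct ys" "hd ys = y" "last ys = last xs"
      "length ys \<le> length xs"
      using Cons.IH xs by auto
    then obtain ws where ws: "ys = y # ws"
      by (cases ys) (auto simp: walk_def)
    show ?thesis
    proof (cases "x \<in> set ys")
      case False
      then show ?thesis
        using Cons.prems(1)[of "x # ys"] ys ws xy xs by simp
    next
      case True
      then obtain as bs where split: "ys = as @ x # bs"
        by (meson split_list)
      then show ?thesis
        using Cons.prems(1)[of "x # bs"] walk_appendD2[of E as "x # bs"] ys xs by auto
    qed
  qed
qed

lemma gdist_le_walk_length:
  assumes "walk E xs"
  shows "gdist E (hd xs) (last xs) \<le> enat (length xs - 1)"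
  unfolding gdist_def by (rule Inf_lower) (use assms in blast)

lemma gdist_edge_le_1: "{u, v} \<in> E \<Longrightarrow> gdist E u v \<le> 1"
  using gdist_le_walk_length[of E "[u, v]"] by (simp add: one_enat_def)

lemma gdist_attained:
  assumes "gdist E u v \<noteq> \<infinity>"
  obtains xs where "walk E xs" "hd xs = u" "last xs = v" "gdist E u v = enat (length xs - 1)"
proof -
  let ?D = "{enat (length xs - 1) | xs. walk E xs \<and> hd xs = u \<and> last xs = v}"
  have D: "gdist E u v = Inf ?D"
    unfolding gdist_def ..
  with assms have "?D \<noteq> {}"
    by (metis Inf_empty top_enat_def)
  then obtain d where "d \<in> ?D"
    by blast
  then have "(LEAST d. d \<in> ?D) \<in> ?D"
    by (rule LeastI)
  with \<open>?D \<noteq> {}\<close> have "gdist E u v \<in> ?D"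
    by (simp only: D Inf_enat_def if_False)
  then show ?thesis
    using that by blast
qed

lemma girth_le_length_path_plus_edge:
  assumes path: "walk (H - {{u, v}}) ys" "distinct ys" "hd ys = u" "last ys = v"
    and edge: "{u, v} \<in> H" "u \<noteq> v"
  shows "girth H \<le> enat (length ys)"
proof -
  have "length ys \<noteq> 2"
  proof
    assume "length ys = 2"
    then obtain a b where "ys = [a, b]"
      by (auto simp: numeral_2_eq_2 length_Suc_conv)
    then show False using path by simp
  qed
  moreover have "length ys \<noteq> 1" and "length ys \<noteq> 0"
    using path edge by (auto simp: length_Suc_conv walk_def)
  ultimately have "length ys \<ge> 3"
    by linarith
  then have "is_cycle H ys"
    unfolding is_cycle_def using path edge walk_mono[OF path(1)]
    by (auto simp: insert_commute)
  then show ?thesis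
    unfolding girth_def by (auto intro: Inf_lower)
qed

lemma gdist_gt_if_girth_ge:
  assumes edge: "{u, v} \<in> H" "u \<noteq> v" and sub: "G \<subseteq> H - {{u, v}}"
    and girth: "enat (k + 2) \<le> girth H"
  shows "enat k < gdist G u v"
proof (rule ccontr)
  assume "\<not> enat k < gdist G u v"
  then have short: "gdist G u v \<le> enat k" by simp
  then have "gdist G u v \<noteq> \<infinity>" by (cases "gdist G u v") simp_all
  then obtain xs where xs: "walk G xs" "hd xs = u" "last xs = v"
    "gdist G u v = enat (length xs - 1)"
    by (rule gdist_attained)
  with short have xs_length: "length xs - 1 \<le> k" by simp
  obtain ys where ys: "walk G ys" "distinct ys" "hd ys = hd xs" "last ys = last xs"
    "length ys \<le> length xs"
    by (rule walk_to_path[OF xs(1)])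
  have "girth H \<le> enat (length ys)"
    using girth_le_length_path_plus_edge[OF walk_mono[OF ys(1) sub]] ys xs edge by simp
  with girth have "enat (k + 2) \<le> enat (length ys)"
    by (rule order_trans)
  moreover have "length xs \<noteq> 0"
    using xs(1) by (simp add: walk_def)
  ultimately show False
    using xs_length ys(5) by simp
qed

lemma graph_on_finite: "graph_on n E \<Longrightarrow> finite E"
  unfolding graph_on_def
  by (rule finite_subset[of _ "(\<lambda>(u, v). {u, v}) ` ({..<n} \<times> {..<n})"]) auto

lemma graph_on_subset: "graph_on n E \<Longrightarrow> H \<subseteq> E \<Longrightarrow> graph_on n H"
  unfolding graph_on_def by blast

lemma foldl_greedy_step_girth_ge:
  assumes "graph_on n H" and girth: "enat (k + 2) \<le> girth H"
  shows "distinct xs \<Longrightarrow> set xs \<subseteq> H \<Longrightarrow> G \<subseteq> H \<Longrightarrow> G \<inter> set xs = {} \<Longrightarrow>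
    foldl (greedy_step k) G xs = G \<union> set xs"
proof (induction xs arbitrary: G)
  case (Cons e xs)
  then obtain u v where e: "e = {u, v}" "u \<noteq> v" "e \<in> H"
    using \<open>graph_on n H\<close> unfolding graph_on_def by auto
  moreover have "G \<subseteq> H - {e}"
    using Cons.prems e by auto
  ultimately have "enat k < gdist G u v"
    using gdist_gt_if_girth_ge[OF _ _ _ girth] by simp
  then have "\<exists>a b. e = {a, b} \<and> enat k < gdist G a b"
    using e(1) by blast
  then have "greedy_step k G e = insert e G"
    unfolding greedy_step_def by (rule if_P)
  then show ?case
    using Cons.IH[of "insert e G"] Cons.prems by auto
qed simp

lemma foldl_greedy_step_spanned:
  assumes "\<And>u v. {u, v} \<in> set xs \<Longrightarrow> gdist H u v \<le> enat k"
  shows "foldl (greedy_step k) H xs = H"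
proof -
  have "greedy_step k H e = H" if "e \<in> set xs" for e
    unfolding greedy_step_def
    by (rule if_not_P) (use assms that in \<open>auto simp: not_less\<close>)
  then show ?thesis
    by (induction xs) auto
qed

lemma spanner_edge_gdist_le:
  assumes "graph_on n E" "is_spanner n k E H" "{u, v} \<in> E"
  shows "gdist H u v \<le> enat k"
proof -
  have E_1: "gdist E u v \<le> 1"
    using gdist_edge_le_1[OF assms(3)] .
  then have "gdist E u v \<noteq> \<infinity>"
    by (cases "gdist E u v") (auto simp: one_enat_def)
  moreover have "u < n" "v < n"
    using assms(1,3) unfolding graph_on_def by (auto simp: doubleton_eq_iff)
  ultimately have "gdist H u v \<le> enat k * gdist E u v"
    using assms(2) unfolding is_spanner_def by blast
  also have "\<dots> \<le> enat k"
    using mult_left_mono[OF E_1, of "enat k"] by simp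
  finally show ?thesis .
qed

lemma greedy_outputs_spanner_if_girth_ge:
  assumes G: "graph_on n E" and spanner: "is_spanner n k E H"
    and girth: "enat (k + 2) \<le> girth H"
  shows "\<exists>\<sigma>. edge_ordering E \<sigma> \<and> greedy k \<sigma> = H"
proof -
  have "H \<subseteq> E" and "finite E"
    using spanner G graph_on_finite unfolding is_spanner_def by auto
  then obtain hs rs where hs: "set hs = H" "distinct hs" and rs: "set rs = E - H" "distinct rs"
    by (meson finite_Diff finite_distinct_list finite_subset)
  have "foldl (greedy_step k) {} hs = H"
    using foldl_greedy_step_girth_ge[OF graph_on_subset[OF G \<open>H \<subseteq> E\<close>] girth, of hs "{}"] hs
    by simp
  moreover have "foldl (greedy_step k) H rs = H"
    by (rule foldl_greedy_step_spanned) (use spanner_edge_gdist_le[OF G spanner] rs in auto)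
  ultimately have "greedy k (hs @ rs) = H"
    unfolding greedy_def by simp
  moreover have "edge_ordering E (hs @ rs)"
    unfolding edge_ordering_def using hs rs \<open>H \<subseteq> E\<close> by auto
  ultimately show ?thesis by auto
qed

theorem corollary1p5:
  fixes n k :: nat
  shows "(extremely_good n k \<longrightarrow> greedy_completely_universally_optimal n k) \<and>
         (good n k \<longrightarrow> greedy_universally_optimal n k)"
proof (intro conjI impI)
  assume "extremely_good n k"
  then show "greedy_completely_universally_optimal n k"
    unfolding extremely_good_def greedy_completely_universally_optimal_def is_min_spanner_def
    using greedy_outputs_spanner_if_girth_ge by blast
next
  assume "good n k"
  then show "greedy_universally_optimal n k"
    unfolding good_def greedy_universally_optimal_def is_min_spanner_def
    using greedy_outputs_spanner_if_girth_ge by blast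
qed

end
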